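(* Let $n,p$ be positive integers, $X\in\mathbb{R}^{n\times p}$, $\mathbf y\in\mathbb{R}^n$, $\delta>0$ and $\lambda>0$. The function $g_\lambda:\mathbb{R}^p\to\mathbb{R}$, $g_\lambda(\mathbf w)=f_\lambda(\mathbf t(\mathbf w))$, is continuous at every point $\mathbf w\in\mathbb{R}^p$.
   Context: For $\mathbf t\in[0,1]^p$, $T_{\mathbf t}=\mathrm{Diag}(t_1,\dots,t_p)$, $X_{\mathbf t}=XT_{\mathbf t}$, $L_{\mathbf t}=\frac1n[X_{\mathbf t}^\top X_{\mathbf t}+\delta(I-T_{\mathbf t}^2)]$ with $I$ the $p\times p$ identity, $\widetilde{\boldsymbol\beta}_{\mathbf t}:=L_{\mathbf t}^{+}\left(X_{\mathbf t}^\top\mathbf y/n\right)$ with $L_{\mathbf t}^+$ the Moore–Penrose pseudo-inverse, and $f_\lambda(\mathbf t)=\frac1n\|\mathbf y-X_{\mathbf t}\widetilde{\boldsymbol\beta}_{\mathbf t}\|_2^2+\lambda\sum_{j=1}^p t_j$. The map $\mathbf t(\mathbf w)$ is defined coordinatewise by $t_j(w_j)=1-\exp(-w_j^2)$, $j=1,\dots,p$. *)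

theory Defs
  imports "HOL-Analysis.Analysis"
begin

text \<open>Moore--Penrose pseudo-inverse, defined by the four Penrose conditions
  (it exists and is unique for every real matrix).\<close>
definition is_pinv :: "real^'m^'n \<Rightarrow> real^'n^'m \<Rightarrow> bool" where
  "is_pinv A B \<longleftrightarrow> A ** B ** A = A \<and> B ** A ** B = B \<and>
     transpose (A ** B) = A ** B \<and> transpose (B ** A) = B ** A"

definition pinv :: "real^'m^'n \<Rightarrow> real^'n^'m" where
  "pinv A = (THE B. is_pinv A B)"

definition Tmat :: "real^'p \<Rightarrow> real^'p^'p" where
  "Tmat t = (\<chi> i j. if i = j then t $ i else 0)"

definition Xt :: "real^'p^'n \<Rightarrow> real^'p \<Rightarrow> real^'p^'n" where
  "Xt X t = X ** Tmat t"

definition Lt :: "real^'p^'n \<Rightarrow> real \<Rightarrow> real^'p \<Rightarrow> real^'p^'p" where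
  "Lt X \<delta> t = (1 / real CARD('n)) *\<^sub>R
     (transpose (Xt X t) ** Xt X t + \<delta> *\<^sub>R (mat 1 - Tmat t ** Tmat t))"

definition beta_t :: "real^'p^'n \<Rightarrow> real^'n \<Rightarrow> real \<Rightarrow> real^'p \<Rightarrow> real^'p" where
  "beta_t X y \<delta> t = pinv (Lt X \<delta> t) *v ((1 / real CARD('n)) *\<^sub>R (transpose (Xt X t) *v y))"

definition f_obj :: "real^'p^'n \<Rightarrow> real^'n \<Rightarrow> real \<Rightarrow> real \<Rightarrow> real^'p \<Rightarrow> real" where
  "f_obj X y \<delta> lam t = (1 / real CARD('n)) * (norm (y - Xt X t *v beta_t X y \<delta> t))\<^sup>2
     + lam * (\<Sum>j\<in>UNIV. t $ j)"

definition t_of_w :: "real^'p \<Rightarrow> real^'p" where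
  "t_of_w w = (\<chi> j. 1 - exp (- ((w $ j)\<^sup>2)))"

definition g_obj :: "real^'p^'n \<Rightarrow> real^'n \<Rightarrow> real \<Rightarrow> real \<Rightarrow> real^'p \<Rightarrow> real" where
  "g_obj X y \<delta> lam w = f_obj X y \<delta> lam (t_of_w w)"

end

theory Submission
  imports Defs
begin

text \<open>Whenever every \<open>|t\<^sub>j| < 1\<close>, the matrix \<open>L\<^sub>t\<close> is positive definite: its quadratic form is
  \<open>(|X\<^sub>t x|\<^sup>2 + \<delta> \<Sum>\<^sub>j (1 - t\<^sub>j\<^sup>2) x\<^sub>j\<^sup>2) / n\<close>. Since \<open>0 \<le> t\<^sub>j(w\<^sub>j) < 1\<close>, the pseudo-inverse in
  \<open>f\<^sub>\<lambda>(t(w))\<close> is therefore a genuine inverse, and by Cramer's rule matrix inversion is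
  continuous at invertible matrices. So \<open>g\<^sub>\<lambda>\<close> is a composition of continuous maps.\<close>

lemma continuous_vec_lambda [continuous_intros]:
  "(\<And>i. continuous F (\<lambda>x. f x i)) \<Longrightarrow> continuous F (\<lambda>x. \<chi> i. f x i)"
  unfolding continuous_def by (rule tendsto_vec_lambda)

lemma continuous_vec_nth [continuous_intros]:
  "continuous F f \<Longrightarrow> continuous F (\<lambda>x. f x $ i)"
  unfolding continuous_def by (rule tendsto_vec_nth)

lemma continuous_matrix_matrix_mult [continuous_intros]:
  fixes A :: "'a::t2_space \<Rightarrow> 'r::real_normed_field^'m^'n" and B :: "'a \<Rightarrow> 'r^'k^'m"
  assumes "continuous F A" "continuous F B"
  shows "continuous F (\<lambda>x. A x ** B x)"
  unfolding matrix_matrix_mult_def by (intro continuous_intros assms)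

lemma continuous_matrix_vector_mult [continuous_intros]:
  fixes A :: "'a::t2_space \<Rightarrow> 'r::real_normed_field^'m^'n" and v :: "'a \<Rightarrow> 'r^'m"
  assumes "continuous F A" "continuous F v"
  shows "continuous F (\<lambda>x. A x *v v x)"
  unfolding matrix_vector_mult_def by (intro continuous_intros assms)

lemma continuous_transpose [continuous_intros]:
  fixes A :: "'a::t2_space \<Rightarrow> 'r::real_normed_field^'m^'n"
  assumes "continuous F A"
  shows "continuous F (\<lambda>x. transpose (A x))"
  unfolding transpose_def by (intro continuous_intros assms)

lemma continuous_det [continuous_intros]:
  fixes A :: "'a::t2_space \<Rightarrow> 'r::real_normed_field^'n^'n"
  assumes "continuous F A"
  shows "continuous F (\<lambda>x. det (A x))"
  unfolding det_def by (intro continuous_intros assms)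

lemma pinv_eqI:
  fixes A :: "real^'m^'n"
  assumes AB: "A ** B = mat 1" and BA: "B ** A = mat 1"
  shows "pinv A = B"
  unfolding pinv_def
proof (rule the_equality)
  show "is_pinv A B"
    using assms by (simp add: is_pinv_def matrix_mul_lid matrix_mul_rid transpose_mat)
next
  fix B' assume "is_pinv A B'"
  then have ABA: "A ** B' ** A = A" by (simp add: is_pinv_def)
  have "B' = (B ** A) ** B' ** (A ** B)" using assms by (simp add: matrix_mul_lid matrix_mul_rid)
  also have "\<dots> = B ** (A ** B' ** A) ** B" by (simp add: matrix_mul_assoc)
  also have "\<dots> = B" using assms ABA by (simp add: matrix_mul_assoc matrix_mul_rid)
  finally show "B' = B" .
qed

lemma pinv_cramer:
  fixes A :: "real^'n^'n"
  assumes "det A \<noteq> 0"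
  shows "pinv A = (\<chi> k j. det (\<chi> i l. if l = k then axis j 1 $ i else A $ i $ l) / det A)"
proof -
  obtain B where AB: "A ** B = mat 1" and BA: "B ** A = mat 1"
    using assms unfolding invertible_det_nz[symmetric] invertible_def by blast
  have "B $ k $ j = det (\<chi> i l. if l = k then axis j 1 $ i else A $ i $ l) / det A" for k j
  proof -
    have "A *v column j B = axis j 1"
      by (simp flip: matrix_vector_mult_basis add: matrix_vector_mul_assoc AB)
    then show ?thesis
      using cramer[OF assms] by (simp add: vec_eq_iff column_def)
  qed
  then show ?thesis
    by (simp add: pinv_eqI[OF AB BA] vec_eq_iff)
qed

lemma isCont_pinv:
  fixes A :: "real^'n^'n"
  assumes "invertible A"
  shows "isCont pinv A"
proof -
  have detA: "det A \<noteq> 0" using assms by (simp add: invertible_det_nz)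
  have "open {M :: real^'n^'n. det M \<noteq> 0}"
    by (intro open_Collect_neq continuous_at_imp_continuous_on ballI continuous_intros)
  then have "eventually (\<lambda>M. det M \<noteq> 0) (nhds A)"
    using eventually_nhds_in_open detA by fastforce
  then have "isCont pinv A \<longleftrightarrow>
      isCont (\<lambda>M. \<chi> k j. det (\<chi> i l. if l = k then axis j 1 $ i else M $ i $ l) / det M) A"
    by (intro isCont_cong) (auto elim!: eventually_mono simp: pinv_cramer)
  also have "\<dots>"
  proof -
    have entry: "isCont (\<lambda>M. if l = k then c else M $ i $ l) A" for k l i and c :: real
      by (cases "l = k") (auto intro!: continuous_intros)
    show ?thesis
      using detA by (intro continuous_intros entry)
  qed
  finally show ?thesis .
qed

lemma continuous_Tmat [continuous_intros]:
  fixes t :: "'a::t2_space \<Rightarrow> real^'p"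
  assumes "continuous F t"
  shows "continuous F (\<lambda>x. Tmat (t x))"
  unfolding Tmat_def
proof (intro continuous_vec_lambda)
  show "continuous F (\<lambda>x. if i = j then t x $ i else 0)" for i j
    by (cases "i = j") (auto intro!: continuous_intros assms)
qed

lemma continuous_Lt [continuous_intros]:
  fixes X :: "real^'p^'n" and t :: "'a::t2_space \<Rightarrow> real^'p"
  assumes "continuous F t"
  shows "continuous F (\<lambda>x. Lt X \<delta> (t x))"
  unfolding Lt_def Xt_def by (intro continuous_intros assms)

lemma Tmat_mult_vec: "Tmat t *v x = (\<chi> j. t $ j * x $ j)"
proof -
  have "(\<Sum>j\<in>UNIV. (if i = j then t $ i else 0) * x $ j) = t $ i * x $ i" for i
    by (simp add: if_distrib[of "\<lambda>z. z * _"] cong: if_cong)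
  then show ?thesis by (simp add: vec_eq_iff matrix_vector_mult_def Tmat_def)
qed

lemma inner_Lt:
  fixes X :: "real^'p^'n"
  shows "x \<bullet> (Lt X \<delta> t *v x) =
    ((norm (Xt X t *v x))\<^sup>2 + \<delta> * (\<Sum>j\<in>UNIV. (1 - (t $ j)\<^sup>2) * (x $ j)\<^sup>2)) / real CARD('n)"
proof -
  define M where "M = Xt X t"
  have "(mat 1 - Tmat t ** Tmat t) *v x = (\<chi> j. (1 - (t $ j)\<^sup>2) * x $ j)"
    by (simp add: matrix_vector_mult_diff_rdistrib flip: matrix_vector_mul_assoc)
       (simp add: Tmat_mult_vec vec_eq_iff algebra_simps power2_eq_square)
  then have "Lt X \<delta> t *v x =
      (1 / real CARD('n)) *\<^sub>R (transpose M *v (M *v x) + \<delta> *\<^sub>R (\<chi> j. (1 - (t $ j)\<^sup>2) * x $ j))"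
    by (simp add: Lt_def M_def matrix_vector_mult_add_rdistrib matrix_vector_mul_assoc
        flip: scaleR_matrix_vector_assoc)
  moreover have "x \<bullet> (transpose M *v (M *v x)) = (norm (M *v x))\<^sup>2"
    by (metis dot_lmul_matrix inner_commute power2_norm_eq_inner transpose_matrix_vector)
  moreover have "x \<bullet> (\<chi> j. (1 - (t $ j)\<^sup>2) * x $ j) = (\<Sum>j\<in>UNIV. (1 - (t $ j)\<^sup>2) * (x $ j)\<^sup>2)"
    by (simp add: inner_vec_def power2_eq_square algebra_simps)
  ultimately show ?thesis
    by (simp add: M_def inner_add_right field_simps)
qed

lemma invertible_Lt:
  fixes X :: "real^'p^'n"
  assumes "\<delta> > 0" and "\<And>j. \<bar>t $ j\<bar> < 1"
  shows "invertible (Lt X \<delta> t)"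
proof -
  have "x = 0" if "Lt X \<delta> t *v x = 0" for x
  proof -
    have weight_pos: "0 < 1 - (t $ j)\<^sup>2" for j
      using assms(2)[of j] by (simp add: abs_square_less_1)
    then have terms_nonneg: "0 \<le> (1 - (t $ j)\<^sup>2) * (x $ j)\<^sup>2" for j
      by (simp add: less_imp_le)
    have "(norm (Xt X t *v x))\<^sup>2 + \<delta> * (\<Sum>j\<in>UNIV. (1 - (t $ j)\<^sup>2) * (x $ j)\<^sup>2) = 0"
      using inner_Lt[of x X \<delta> t] that by simp
    moreover have "0 \<le> \<delta> * (\<Sum>j\<in>UNIV. (1 - (t $ j)\<^sup>2) * (x $ j)\<^sup>2)"
      using \<open>\<delta> > 0\<close> by (simp add: sum_nonneg terms_nonneg)
    ultimately have "\<delta> * (\<Sum>j\<in>UNIV. (1 - (t $ j)\<^sup>2) * (x $ j)\<^sup>2) = 0"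
      by (simp add: add_nonneg_eq_0_iff)
    then have terms_zero: "(1 - (t $ j)\<^sup>2) * (x $ j)\<^sup>2 = 0" for j
      using \<open>\<delta> > 0\<close> by (simp add: sum_nonneg_eq_0_iff terms_nonneg)
    have "x $ j = 0" for j
      using terms_zero[of j] weight_pos[of j] by simp
    then show "x = 0"
      by (simp add: vec_eq_iff)
  qed
  then show ?thesis
    unfolding invertible_left_inverse matrix_left_invertible_ker by blast
qed

lemma abs_t_of_w_less_1: "\<bar>t_of_w w $ j\<bar> < 1"
proof -
  have "0 < exp (- (w $ j)\<^sup>2)" "exp (- (w $ j)\<^sup>2) \<le> 1"
    by simp_all
  then show ?thesis
    by (simp add: t_of_w_def)
qed

lemma isCont_t_of_w: "isCont t_of_w w"
  unfolding t_of_w_def by (intro continuous_intros)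

theorem corollary1:
  fixes X :: "real^'p^'n" and y :: "real^'n" and \<delta> lam :: real and w :: "real^'p"
  assumes "\<delta> > 0" and "lam > 0"
  shows "isCont (g_obj X y \<delta> lam) w"
proof -
  have "invertible (Lt X \<delta> (t_of_w w))"
    using \<open>\<delta> > 0\<close> abs_t_of_w_less_1 by (rule invertible_Lt)
  then have "isCont (\<lambda>v. pinv (Lt X \<delta> (t_of_w v))) w"
    by (rule isCont_o2[OF continuous_Lt[OF isCont_t_of_w] isCont_pinv])
  then show ?thesis
    unfolding g_obj_def f_obj_def beta_t_def Xt_def
    by (intro continuous_intros isCont_t_of_w)
qed

end
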